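(* Let $m\ge1$ be an integer, $\beta\in\mathbb R$, and let $T>0$ and $f:[-T,T]\to\mathbb R$ be the unique pair with $f''=-f^3+\beta f$, $f(\pm T)=0$, $f'(\pm T)=\mp m$, $f>0$ on $(-T,T)$. Define $k>0$ by $k^2=\tfrac12\bigl(1+\beta/\sqrt{2m^2+\beta^2}\bigr)$ and $K(k)=\int_0^1\frac{dx}{\sqrt{1-x^2}\sqrt{1-k^2x^2}}$. Then $$T=\frac{K(k)}{\sqrt[4]{2m^2+\beta^2}},\qquad \int_{-T}^Tf\,dt=2\sqrt2\arcsin(k),\qquad \int_{-T}^Tf^3\,dt=2\beta\sqrt2\arcsin(k)+2m,$$ $$\int_{-T}^Tf^5\,dt=(2m^2+3\beta^2)\sqrt2\arcsin(k)+3m\beta .$$ *)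

theory Defs
  imports "HOL-Analysis.Analysis"
begin

definition ellK :: "real \<Rightarrow> real" where
  "ellK k = integral {0..1} (\<lambda>x. 1 / (sqrt (1 - x\<^sup>2) * sqrt (1 - k\<^sup>2 * x\<^sup>2)))"

end

theory Submission
  imports Defs
begin

text \<open>
  Conservation of the energy \<open>f'\<^sup>2/2 + f\<^sup>4/4 - \<beta> f\<^sup>2/2\<close>, evaluated at \<open>t = T\<close>, gives
  \<open>2 f'\<^sup>2 = (c\<^sup>2 - f\<^sup>2)(f\<^sup>2 + b)\<close> with \<open>s = \<surd>(2m\<^sup>2 + \<beta>\<^sup>2)\<close>, \<open>c\<^sup>2 = s + \<beta>\<close> and
  \<open>b = s - \<beta>\<close>. On this energy level two explicit functions of \<open>(f, f')\<close> differentiate to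
  something useful. First, \<open>2 arctan (\<surd>2 f' / (f\<^sup>2 + b))\<close> has derivative \<open>-\<surd>2 f\<close>, which
  gives \<open>\<integral>f\<close>. Second, the Jacobi amplitude \<open>\<phi> = arcsin (-\<surd>2 f' / (c \<surd>(f\<^sup>2 + b)))\<close>
  runs from \<open>-\<pi>/2\<close> to \<open>\<pi>/2\<close> with \<open>\<phi>' = \<surd>((f\<^sup>2 + b)/2) = \<surd>s \<surd>(1 - k\<^sup>2 sin\<^sup>2 \<phi>)\<close>,
  so substituting \<open>\<phi>\<close> for \<open>t\<close> turns \<open>2T \<surd>s\<close> into \<open>2 K(k)\<close>. The integrals of
  \<open>f\<^sup>3\<close> and \<open>f\<^sup>5\<close> then follow from the ODE, since \<open>f''\<close> and \<open>(f\<^sup>2 f')'\<close> are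
  polynomials in \<open>f\<close> on the energy level.
\<close>

lemma duffing_energy_constant:
  fixes f f' :: "real \<Rightarrow> real" and S :: "real set"
  assumes "convex S"
    and d1: "\<And>t. t \<in> S \<Longrightarrow> (f has_real_derivative f' t) (at t within S)"
    and d2: "\<And>t. t \<in> S \<Longrightarrow> (f' has_real_derivative \<beta> * f t - f t ^ 3) (at t within S)"
    and "t \<in> S" "u \<in> S"
  shows "(f' t)\<^sup>2 / 2 + (f t) ^ 4 / 4 - \<beta> * (f t)\<^sup>2 / 2
       = (f' u)\<^sup>2 / 2 + (f u) ^ 4 / 4 - \<beta> * (f u)\<^sup>2 / 2"
proof -
  define E where "E t = (f' t)\<^sup>2 / 2 + (f t) ^ 4 / 4 - \<beta> * (f t)\<^sup>2 / 2" for t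
  have "\<exists>c. \<forall>t\<in>S. E t = c"
  proof (rule has_field_derivative_zero_constant[OF \<open>convex S\<close>])
    fix t assume t: "t \<in> S"
    have "(E has_real_derivative
        f' t * (\<beta> * f t - f t ^ 3) + f t ^ 3 * f' t - \<beta> * f t * f' t) (at t within S)"
      unfolding E_def
      by (auto intro!: derivative_eq_intros d1[OF t] d2[OF t]
               simp: field_simps power2_eq_square power3_eq_cube)
    then show "(E has_real_derivative 0) (at t within S)"
      by (simp add: algebra_simps)
  qed
  then show ?thesis using assms(4,5) unfolding E_def by force
qed

lemma duffing_phase_square:
  fixes b c x y :: real
  assumes "2 * y\<^sup>2 = (c\<^sup>2 - x\<^sup>2) * (x\<^sup>2 + b)" "c > 0" "b > 0"
  shows "(- (sqrt 2 * y) / (c * sqrt (x\<^sup>2 + b)))\<^sup>2 = 1 - x\<^sup>2 / c\<^sup>2"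
proof -
  have q: "x\<^sup>2 + b > 0" using \<open>b > 0\<close> by (simp add: add_nonneg_pos)
  have "(- (sqrt 2 * y) / (c * sqrt (x\<^sup>2 + b)))\<^sup>2 = 2 * y\<^sup>2 / (c\<^sup>2 * (x\<^sup>2 + b))"
    using q by (simp add: power_divide power_mult_distrib)
  also have "\<dots> = (c\<^sup>2 - x\<^sup>2) / c\<^sup>2"
    unfolding assms(1) using q by simp
  finally show ?thesis using \<open>c > 0\<close> by (simp add: diff_divide_distrib)
qed

lemma has_real_derivative_duffing_angle:
  fixes f f' :: "real \<Rightarrow> real" and S :: "real set"
  assumes d1: "(f has_real_derivative f' t) (at t within S)"
    and d2: "(f' has_real_derivative \<beta> * f t - f t ^ 3) (at t within S)"
    and energy: "2 * (f' t)\<^sup>2 = (c\<^sup>2 - (f t)\<^sup>2) * ((f t)\<^sup>2 + b)"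
    and cb: "c\<^sup>2 - b = 2 * \<beta>" and b: "b > 0"
  shows "((\<lambda>t. 2 * arctan (sqrt 2 * f' t / ((f t)\<^sup>2 + b))) has_real_derivative - sqrt 2 * f t)
           (at t within S)"
proof -
  define q where "q = (f t)\<^sup>2 + b"
  have q: "q > 0" unfolding q_def using b by (simp add: add_nonneg_pos)
  define D where "D = c\<^sup>2 + b"
  have D: "D > 0" unfolding D_def using b by (simp add: add_nonneg_pos)
  have denom: "1 + (sqrt 2 * f' t / q)\<^sup>2 = D / q"
  proof -
    have "q\<^sup>2 + 2 * (f' t)\<^sup>2 = D * q" unfolding energy q_def D_def by algebra
    then show ?thesis using q by (simp add: field_simps power_mult_distrib power2_eq_square)
  qed
  have numer: "(\<beta> * f t - f t ^ 3) * sqrt 2 * q - sqrt 2 * f' t * (2 * f' t * f t)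
             = - sqrt 2 * (D / 2) * f t * q"
  proof -
    have "(\<beta> * f t - f t ^ 3) * q - f t * (2 * (f' t)\<^sup>2) = - (D / 2) * f t * q"
      unfolding energy q_def D_def using cb by algebra
    then show ?thesis by algebra
  qed
  have "((\<lambda>t. 2 * arctan (sqrt 2 * f' t / ((f t)\<^sup>2 + b))) has_real_derivative
      2 * (inverse (1 + (sqrt 2 * f' t / q)\<^sup>2) *
        (((\<beta> * f t - f t ^ 3) * sqrt 2 * q - sqrt 2 * f' t * (2 * f' t * f t)) / (q * q))))
      (at t within S)"
    unfolding q_def using q[unfolded q_def]
    by (auto intro!: derivative_eq_intros d1 d2 simp: algebra_simps)
  moreover have "2 * (inverse (1 + (sqrt 2 * f' t / q)\<^sup>2) *
        (((\<beta> * f t - f t ^ 3) * sqrt 2 * q - sqrt 2 * f' t * (2 * f' t * f t)) / (q * q)))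
      = - sqrt 2 * f t"
    unfolding denom numer using q D by (simp add: field_simps)
  ultimately show ?thesis by (rule DERIV_cong)
qed

lemma has_real_derivative_duffing_phase:
  fixes f f' :: "real \<Rightarrow> real" and S :: "real set"
  assumes d1: "(f has_real_derivative f' t) (at t within S)"
    and d2: "(f' has_real_derivative \<beta> * f t - f t ^ 3) (at t within S)"
    and energy: "2 * (f' t)\<^sup>2 = (c\<^sup>2 - (f t)\<^sup>2) * ((f t)\<^sup>2 + b)"
    and cb: "c\<^sup>2 - b = 2 * \<beta>" and c: "c > 0" and b: "b > 0" and ft: "f t > 0"
  shows "((\<lambda>t. arcsin (- (sqrt 2 * f' t) / (c * sqrt ((f t)\<^sup>2 + b))))
           has_real_derivative sqrt (((f t)\<^sup>2 + b) / 2)) (at t within S)"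
proof -
  define q where "q = (f t)\<^sup>2 + b"
  have q: "q > 0" unfolding q_def using b by (simp add: add_nonneg_pos)
  define A where "A = - (sqrt 2 * f' t) / (c * sqrt q)"
  have A2: "1 - A\<^sup>2 = (f t / c)\<^sup>2"
    using duffing_phase_square[OF energy c b] unfolding A_def q_def by (simp add: power_divide)
  moreover have "(f t / c)\<^sup>2 > 0" using c ft by simp
  ultimately have "A\<^sup>2 < 1" by linarith
  then have A: "-1 < A" "A < 1" unfolding abs_square_less_1 by linarith+
  have "((\<lambda>t. - (sqrt 2 * f' t) / (c * sqrt ((f t)\<^sup>2 + b))) has_real_derivative
      - (sqrt 2 * c * ((\<beta> * f t - f t ^ 3) * q - f t * (f' t)\<^sup>2)) / (c\<^sup>2 * sqrt q * q))
      (at t within S)"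
    using q c unfolding q_def
    by (auto intro!: derivative_eq_intros d1 d2 simp: divide_simps power2_eq_square)
       (simp add: algebra_simps)
  moreover have "- (sqrt 2 * c * ((\<beta> * f t - f t ^ 3) * q - f t * (f' t)\<^sup>2)) / (c\<^sup>2 * sqrt q * q)
      = sqrt 2 * f t * sqrt q / (2 * c)"
  proof -
    have key: "(\<beta> * f t - f t ^ 3) * q - f t * (f' t)\<^sup>2 = - f t * q\<^sup>2 / 2"
      unfolding q_def using energy cb by algebra
    have "- (sqrt 2 * c * (- f t * q\<^sup>2 / 2)) / (c\<^sup>2 * sqrt q * q)
        = sqrt 2 * f t / (2 * c) * (q / sqrt q)"
      using q c by (simp add: field_simps power2_eq_square)
    then have "- (sqrt 2 * c * ((\<beta> * f t - f t ^ 3) * q - f t * (f' t)\<^sup>2)) / (c\<^sup>2 * sqrt q * q)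
        = sqrt 2 * f t / (2 * c) * (q / sqrt q)"
      unfolding key .
    also have "q / sqrt q = sqrt q" using q by (simp add: real_div_sqrt)
    finally show ?thesis by simp
  qed
  ultimately have "((\<lambda>t. - (sqrt 2 * f' t) / (c * sqrt ((f t)\<^sup>2 + b))) has_real_derivative
      sqrt 2 * f t * sqrt q / (2 * c)) (at t within S)"
    by (rule DERIV_cong)
  from DERIV_chain2[OF DERIV_arcsin[OF A, unfolded A_def q_def] this]
  have "((\<lambda>t. arcsin (- (sqrt 2 * f' t) / (c * sqrt ((f t)\<^sup>2 + b)))) has_real_derivative
      inverse (sqrt (1 - A\<^sup>2)) * (sqrt 2 * f t * sqrt q / (2 * c))) (at t within S)"
    unfolding A_def q_def .
  moreover have "inverse (sqrt (1 - A\<^sup>2)) * (sqrt 2 * f t * sqrt q / (2 * c)) = sqrt (q / 2)"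
    using ft c unfolding A2 by (simp add: real_sqrt_divide field_simps)
  ultimately show ?thesis unfolding q_def by simp
qed

lemma continuous_on_legendre_integrand:
  assumes "k\<^sup>2 < (1::real)"
  shows "continuous_on S (\<lambda>y. 1 / sqrt (1 - k\<^sup>2 * (sin y)\<^sup>2))"
proof -
  have "1 - k\<^sup>2 * (sin y)\<^sup>2 > 0" for y
  proof -
    have "(sin y)\<^sup>2 \<le> 1" using abs_sin_le_one[of y] abs_square_le_1 by blast
    then have "k\<^sup>2 * (sin y)\<^sup>2 \<le> k\<^sup>2" by (simp add: mult_left_le)
    then show ?thesis using assms by linarith
  qed
  then show ?thesis by (intro continuous_intros) (auto simp: less_imp_neq[symmetric])
qed

lemma ellK_eq_integral_sin:
  assumes "k\<^sup>2 < 1"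
  shows "ellK k = integral {0..pi/2} (\<lambda>y. 1 / sqrt (1 - k\<^sup>2 * (sin y)\<^sup>2))"
proof -
  let ?h = "\<lambda>y. 1 / sqrt (1 - k\<^sup>2 * (sin y)\<^sup>2)"
  have "((\<lambda>x. inverse (sqrt (1 - x\<^sup>2)) *\<^sub>R ?h (arcsin x)) has_integral
      integral {arcsin 0..arcsin 1} ?h - integral {arcsin 1..arcsin 0} ?h) {0..1}"
  proof (rule has_integral_substitution_general[of "{1}" _ _ _ 0 "pi/2"])
    show "arcsin ` {0..1} \<subseteq> {0..pi/2}"
      using arcsin_bounded arcsin_le_arcsin[of 0] by (auto intro: arcsin_le_arcsin)
    show "continuous_on {0..1} arcsin"
      using continuous_on_arcsin' by (rule continuous_on_subset) auto
    fix x :: real assume "x \<in> {0..1} - {1}"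
    then show "(arcsin has_real_derivative inverse (sqrt (1 - x\<^sup>2))) (at x within {0..1})"
      by (intro DERIV_arcsin[THEN has_field_derivative_at_within]) auto
  qed (use continuous_on_legendre_integrand[OF assms] in auto)
  then have "((\<lambda>x. inverse (sqrt (1 - x\<^sup>2)) *\<^sub>R ?h (arcsin x)) has_integral
      integral {0..pi/2} ?h) {0..1}"
    by simp
  then have "((\<lambda>x. 1 / (sqrt (1 - x\<^sup>2) * sqrt (1 - k\<^sup>2 * x\<^sup>2))) has_integral
      integral {0..pi/2} ?h) {0..1}"
    by (rule has_integral_eq[rotated]) (auto simp: field_simps)
  then show ?thesis unfolding ellK_def by (rule integral_unique)
qed

lemma ellK_eq_integral_sin_symmetric:
  assumes "k\<^sup>2 < 1"
  shows "integral {-(pi/2)..pi/2} (\<lambda>y. 1 / sqrt (1 - k\<^sup>2 * (sin y)\<^sup>2)) = 2 * ellK k"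
proof -
  let ?h = "\<lambda>y. 1 / sqrt (1 - k\<^sup>2 * (sin y)\<^sup>2)"
  have int: "?h integrable_on {a..b}" for a b
    using continuous_on_legendre_integrand[OF assms] by (rule integrable_continuous_real)
  from has_integral_reflect_real[where f = ?h, THEN iffD2, OF integrable_integral[OF int], of 0 "pi/2"]
  have "(?h has_integral integral {0..pi/2} ?h) {-(pi/2)..0}" by simp
  then have "integral {-(pi/2)..0} ?h = integral {0..pi/2} ?h"
    by (simp add: integral_unique)
  moreover have "integral {-(pi/2)..0} ?h + integral {0..pi/2} ?h = integral {-(pi/2)..pi/2} ?h"
    by (rule Henstock_Kurzweil_Integration.integral_combine) (use int in auto)
  ultimately show ?thesis using ellK_eq_integral_sin[OF assms] by simp
qed

locale duffing_bvp =
  fixes m :: nat and \<beta> T :: real and f f' :: "real \<Rightarrow> real"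
  assumes m: "m \<ge> 1"
    and T: "T > 0"
    and d1: "\<And>t. t \<in> {-T..T} \<Longrightarrow> (f has_real_derivative f' t) (at t within {-T..T})"
    and d2: "\<And>t. t \<in> {-T..T} \<Longrightarrow>
               (f' has_real_derivative (\<beta> * f t - (f t) ^ 3)) (at t within {-T..T})"
    and bc: "f (-T) = 0" "f T = 0" "f' (-T) = real m" "f' T = - real m"
    and pos: "\<And>t. t \<in> {-T<..<T} \<Longrightarrow> f t > 0"
begin

definition s :: real where "s = sqrt (2 * (real m)\<^sup>2 + \<beta>\<^sup>2)"
definition b :: real where "b = s - \<beta>"
definition c :: real where "c = sqrt (s + \<beta>)"
definition modulus :: real where "modulus = c / sqrt (2 * s)"

lemma s_gt_abs: "s > \<bar>\<beta>\<bar>"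
proof -
  have "sqrt (\<beta>\<^sup>2) < s" unfolding s_def using m by (intro real_sqrt_less_mono) simp
  then show ?thesis by simp
qed

lemma s_pos: "s > 0" and b_pos: "b > 0" and c_pos: "c > 0"
  using s_gt_abs unfolding b_def c_def by auto

lemma c_sq: "c\<^sup>2 = s + \<beta>"
  using s_gt_abs unfolding c_def by simp

lemma c_sq_minus_b: "c\<^sup>2 - b = 2 * \<beta>"
  unfolding c_sq b_def by simp

lemma c_sq_plus_b: "c\<^sup>2 + b = 2 * s"
  unfolding c_sq b_def by simp

lemma c_sq_times_b: "c\<^sup>2 * b = 2 * (real m)\<^sup>2"
proof -
  have "s\<^sup>2 = 2 * (real m)\<^sup>2 + \<beta>\<^sup>2" unfolding s_def by simp
  then show ?thesis unfolding c_sq b_def by algebra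
qed

lemma energy: "t \<in> {-T..T} \<Longrightarrow> 2 * (f' t)\<^sup>2 = (c\<^sup>2 - (f t)\<^sup>2) * ((f t)\<^sup>2 + b)"
proof -
  assume "t \<in> {-T..T}"
  with T have "(f' t)\<^sup>2 / 2 + (f t) ^ 4 / 4 - \<beta> * (f t)\<^sup>2 / 2 = (real m)\<^sup>2 / 2"
    using duffing_energy_constant[of "{-T..T}" f f' \<beta> t T] d1 d2 bc by simp
  then show ?thesis using c_sq_minus_b c_sq_times_b by algebra
qed

lemma modulus_sq: "modulus\<^sup>2 = (1 + \<beta> / s) / 2"
  unfolding modulus_def using s_pos c_sq by (simp add: power_divide field_simps)

lemma modulus_pos: "modulus > 0"
  unfolding modulus_def using c_pos s_pos by simp

lemma modulus_sq_less_1: "modulus\<^sup>2 < 1"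
  unfolding modulus_sq using s_gt_abs s_pos by (simp add: field_simps)

lemma arcsin_modulus: "arcsin modulus = arctan (sqrt 2 * real m / b)"
proof -
  have "1 - modulus\<^sup>2 = b / (2 * s)"
    unfolding modulus_sq b_def using s_pos by (simp add: field_simps)
  then have "modulus / sqrt (1 - modulus\<^sup>2) = c / sqrt b"
    unfolding modulus_def using s_pos by (simp add: real_sqrt_divide)
  also have "\<dots> = sqrt (c\<^sup>2 * b) / b"
    using c_pos b_pos by (simp add: real_sqrt_mult field_simps)
  also have "\<dots> = sqrt 2 * real m / b"
    unfolding c_sq_times_b by (simp add: real_sqrt_mult)
  finally have "modulus / sqrt (1 - modulus\<^sup>2) = sqrt 2 * real m / b" .
  moreover have "\<bar>modulus\<bar> < 1" using modulus_sq_less_1 by (simp only: abs_square_less_1)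
  ultimately show ?thesis using arcsin_arctan[of modulus] by simp
qed


lemma continuous_on_f: "continuous_on {-T..T} f"
  using d1 by (rule DERIV_continuous_on)

lemma continuous_on_f': "continuous_on {-T..T} f'"
  using d2 by (rule DERIV_continuous_on)

lemma has_integral_f: "(f has_integral 2 * sqrt 2 * arcsin modulus) {-T..T}"
proof -
  define \<theta> where "\<theta> t = 2 * arctan (sqrt 2 * f' t / ((f t)\<^sup>2 + b))" for t
  have "((\<lambda>t. - sqrt 2 * f t) has_integral \<theta> T - \<theta> (-T)) {-T..T}"
  proof (rule fundamental_theorem_of_calculus)
    fix t assume t: "t \<in> {-T..T}"
    show "(\<theta> has_vector_derivative - sqrt 2 * f t) (at t within {-T..T})"
      unfolding \<theta>_def has_real_derivative_iff_has_vector_derivative[symmetric]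
      by (rule has_real_derivative_duffing_angle[OF d1[OF t] d2[OF t] energy[OF t]
            c_sq_minus_b b_pos])
  qed (use T in simp)
  moreover have "\<theta> T - \<theta> (-T) = - 4 * arcsin modulus"
    unfolding \<theta>_def arcsin_modulus using bc by (simp add: arctan_minus)
  ultimately have "((\<lambda>t. - (sqrt 2 / 2) * (- sqrt 2 * f t)) has_integral
      - (sqrt 2 / 2) * (- 4 * arcsin modulus)) {-T..T}"
    by (intro has_integral_mult_right) simp
  then show ?thesis by (simp add: field_simps)
qed

lemma has_integral_f_cube:
  "((\<lambda>t. f t ^ 3) has_integral 2 * \<beta> * sqrt 2 * arcsin modulus + 2 * real m) {-T..T}"
proof -
  have "((\<lambda>t. \<beta> * f t - f t ^ 3) has_integral f' T - f' (-T)) {-T..T}"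
    using T d2 by (intro fundamental_theorem_of_calculus)
      (auto simp: has_real_derivative_iff_has_vector_derivative[symmetric])
  from has_integral_diff[OF has_integral_mult_right[OF has_integral_f, where c = \<beta>] this]
  show ?thesis using bc by (simp add: algebra_simps)
qed

lemma has_integral_f_fifth:
  "((\<lambda>t. f t ^ 5) has_integral
      (2 * (real m)\<^sup>2 + 3 * \<beta>\<^sup>2) * sqrt 2 * arcsin modulus + 3 * real m * \<beta>) {-T..T}"
proof -
  define D where "D t = 2 * (real m)\<^sup>2 * f t + 3 * \<beta> * f t ^ 3 - 2 * f t ^ 5" for t
  have "(D has_integral (f T)\<^sup>2 * f' T - (f (-T))\<^sup>2 * f' (-T)) {-T..T}"
  proof (rule fundamental_theorem_of_calculus)
    fix t assume t: "t \<in> {-T..T}"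
    have "((\<lambda>t. (f t)\<^sup>2 * f' t) has_real_derivative
        2 * f t * (f' t)\<^sup>2 + (f t)\<^sup>2 * (\<beta> * f t - f t ^ 3)) (at t within {-T..T})"
      by (auto intro!: derivative_eq_intros d1[OF t] d2[OF t] simp: power2_eq_square)
    moreover have "2 * f t * (f' t)\<^sup>2 + (f t)\<^sup>2 * (\<beta> * f t - f t ^ 3) = D t"
      unfolding D_def using energy[OF t] c_sq_minus_b c_sq_times_b by algebra
    ultimately show "((\<lambda>t. (f t)\<^sup>2 * f' t) has_vector_derivative D t) (at t within {-T..T})"
      by (simp add: has_real_derivative_iff_has_vector_derivative)
  qed (use T in simp)
  then have "(D has_integral 0) {-T..T}" using bc by simp
  from has_integral_diff[OF has_integral_add[OF
        has_integral_mult_right[OF has_integral_f, where c = "2 * (real m)\<^sup>2"]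
        has_integral_mult_right[OF has_integral_f_cube, where c = "3 * \<beta>"]] this]
  have "((\<lambda>t. 2 * f t ^ 5) has_integral
      2 * (real m)\<^sup>2 * (2 * sqrt 2 * arcsin modulus)
      + 3 * \<beta> * (2 * \<beta> * sqrt 2 * arcsin modulus + 2 * real m)) {-T..T}"
    unfolding D_def by simp
  from has_integral_mult_right[OF this, where c = "1 / 2"] show ?thesis
    by (simp add: algebra_simps power2_eq_square)
qed

definition phase_sine :: "real \<Rightarrow> real"
  where "phase_sine t = - (sqrt 2 * f' t) / (c * sqrt ((f t)\<^sup>2 + b))"

definition phase :: "real \<Rightarrow> real"
  where "phase t = arcsin (phase_sine t)"

lemma phase_sine_sq: "t \<in> {-T..T} \<Longrightarrow> (phase_sine t)\<^sup>2 = 1 - (f t)\<^sup>2 / c\<^sup>2"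
  unfolding phase_sine_def by (rule duffing_phase_square[OF energy c_pos b_pos])

lemma phase_sine_bounds: "t \<in> {-T..T} \<Longrightarrow> -1 \<le> phase_sine t \<and> phase_sine t \<le> 1"
proof -
  assume "t \<in> {-T..T}"
  then have "(phase_sine t)\<^sup>2 \<le> 1" using phase_sine_sq c_pos by simp
  then show ?thesis unfolding abs_square_le_1 by linarith
qed

lemma phase_bounds: "t \<in> {-T..T} \<Longrightarrow> phase t \<in> {-(pi/2)..pi/2}"
  unfolding phase_def using arcsin_bounded phase_sine_bounds by simp

lemma sin_phase_sq: "t \<in> {-T..T} \<Longrightarrow> (sin (phase t))\<^sup>2 = 1 - (f t)\<^sup>2 / c\<^sup>2"
  unfolding phase_def using phase_sine_bounds phase_sine_sq by simp

lemma phase_boundary: "phase (-T) = - (pi / 2)" "phase T = pi / 2"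
proof -
  have "c * sqrt b = sqrt (c\<^sup>2 * b)" using c_pos by (simp add: real_sqrt_mult)
  also have "\<dots> = sqrt 2 * real m" unfolding c_sq_times_b by (simp add: real_sqrt_mult)
  finally have "sqrt 2 * real m / (c * sqrt b) = 1" using m by simp
  then show "phase (-T) = - (pi / 2)" "phase T = pi / 2"
    unfolding phase_def phase_sine_def using bc m by simp_all
qed

lemma continuous_on_phase: "continuous_on {-T..T} phase"
proof -
  have "continuous_on {-T..T} phase_sine"
    unfolding phase_sine_def using continuous_on_f continuous_on_f' c_pos b_pos
    by (intro continuous_intros) (auto simp: add_nonneg_pos less_imp_neq[symmetric])
  then show ?thesis
    unfolding phase_def using phase_sine_bounds by (intro continuous_intros) auto
qed

lemma legendre_integrand_along_phase:
  assumes "t \<in> {-T..T}"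
  shows "sqrt (((f t)\<^sup>2 + b) / 2) * (1 / sqrt (1 - modulus\<^sup>2 * (sin (phase t))\<^sup>2)) = sqrt s"
proof -
  have q: "(f t)\<^sup>2 + b > 0" using b_pos by (simp add: add_nonneg_pos)
  have "modulus\<^sup>2 = c\<^sup>2 / (2 * s)"
    unfolding modulus_def using s_pos by (simp add: power_divide)
  then have "1 - modulus\<^sup>2 * (sin (phase t))\<^sup>2 = 1 - (c\<^sup>2 - (f t)\<^sup>2) / (2 * s)"
    unfolding sin_phase_sq[OF assms] using c_pos by (simp add: right_diff_distrib diff_divide_distrib)
  also have "\<dots> = ((f t)\<^sup>2 + b) / (2 * s)"
    using s_pos c_sq_plus_b by (simp add: field_simps)
  finally have "1 - modulus\<^sup>2 * (sin (phase t))\<^sup>2 = ((f t)\<^sup>2 + b) / (2 * s)" .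
  then have "sqrt (((f t)\<^sup>2 + b) / 2) * (1 / sqrt (1 - modulus\<^sup>2 * (sin (phase t))\<^sup>2))
      = sqrt (((f t)\<^sup>2 + b) / 2) / sqrt (((f t)\<^sup>2 + b) / (2 * s))"
    by (simp only: times_divide_eq_right mult_1_right)
  also have "\<dots> = sqrt ((((f t)\<^sup>2 + b) / 2) / (((f t)\<^sup>2 + b) / (2 * s)))"
    by (rule real_sqrt_divide[symmetric])
  also have "(((f t)\<^sup>2 + b) / 2) / (((f t)\<^sup>2 + b) / (2 * s)) = s"
    using q s_pos by (simp add: field_simps)
  finally show ?thesis .
qed

lemma half_period: "T = ellK modulus / sqrt s"
proof -
  let ?h = "\<lambda>y. 1 / sqrt (1 - modulus\<^sup>2 * (sin y)\<^sup>2)"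
  have "((\<lambda>t. sqrt (((f t)\<^sup>2 + b) / 2) *\<^sub>R ?h (phase t)) has_integral
      integral {phase (-T)..phase T} ?h - integral {phase T..phase (-T)} ?h) {-T..T}"
  proof (rule has_integral_substitution_general[of "{-T, T}" _ _ _ "-(pi/2)" "pi/2"])
    \<comment> \<open>At \<open>\<plusminus>T\<close> the phase reaches \<open>\<plusminus>\<pi>/2\<close>, where arcsin is not differentiable.\<close>
    show "phase ` {-T..T} \<subseteq> {-(pi/2)..pi/2}" using phase_bounds by blast
    fix t assume "t \<in> {-T..T} - {-T, T}"
    then have t: "t \<in> {-T..T}" and "f t > 0" using pos by auto
    then show "(phase has_real_derivative sqrt (((f t)\<^sup>2 + b) / 2)) (at t within {-T..T})"
      unfolding phase_def phase_sine_def
      using has_real_derivative_duffing_phase[OF d1[OF t] d2[OF t] energy[OF t]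
          c_sq_minus_b c_pos b_pos] by blast
  qed (use T continuous_on_phase continuous_on_legendre_integrand[OF modulus_sq_less_1] in auto)
  moreover have "integral {pi/2..-(pi/2)} ?h = 0" by simp
  ultimately have "((\<lambda>t. sqrt (((f t)\<^sup>2 + b) / 2) * ?h (phase t)) has_integral 2 * ellK modulus)
      {-T..T}"
    unfolding phase_boundary ellK_eq_integral_sin_symmetric[OF modulus_sq_less_1] by simp
  then have "((\<lambda>t. sqrt s) has_integral 2 * ellK modulus) {-T..T}"
    by (rule has_integral_eq[rotated]) (use legendre_integrand_along_phase in blast)
  moreover have "((\<lambda>t. sqrt s) has_integral 2 * T * sqrt s) {-T..T}"
    using has_integral_const_real[of "sqrt s" "-T" T] T by simp
  ultimately have "2 * T * sqrt s = 2 * ellK modulus" by (rule has_integral_unique[rotated])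
  then show ?thesis using s_pos by (simp add: field_simps)
qed

end

theorem lemma4p2:
  fixes m :: nat and \<beta> T k :: real and f f' :: "real \<Rightarrow> real"
  assumes m: "m \<ge> 1"
    and T: "T > 0"
    and d1: "\<And>t. t \<in> {-T..T} \<Longrightarrow> (f has_real_derivative f' t) (at t within {-T..T})"
    and d2: "\<And>t. t \<in> {-T..T} \<Longrightarrow>
               (f' has_real_derivative (\<beta> * f t - (f t) ^ 3)) (at t within {-T..T})"
    and bc: "f (-T) = 0" "f T = 0" "f' (-T) = real m" "f' T = - real m"
    and pos: "\<And>t. t \<in> {-T<..<T} \<Longrightarrow> f t > 0"
    and kpos: "k > 0"
    and kdef: "k\<^sup>2 = (1 + \<beta> / sqrt (2 * (real m)\<^sup>2 + \<beta>\<^sup>2)) / 2"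
  shows "T = ellK k / root 4 (2 * (real m)\<^sup>2 + \<beta>\<^sup>2)
    \<and> integral {-T..T} f = 2 * sqrt 2 * arcsin k
    \<and> integral {-T..T} (\<lambda>t. (f t) ^ 3) = 2 * \<beta> * sqrt 2 * arcsin k + 2 * real m
    \<and> integral {-T..T} (\<lambda>t. (f t) ^ 5)
           = (2 * (real m)\<^sup>2 + 3 * \<beta>\<^sup>2) * sqrt 2 * arcsin k + 3 * real m * \<beta>"
proof -
  interpret duffing_bvp m \<beta> T f f'
    using assms by unfold_locales auto
  have "k = modulus"
    using kdef kpos modulus_pos unfolding modulus_sq[unfolded s_def, symmetric]
    by (simp add: power2_eq_iff_nonneg)
  moreover have "root 4 (2 * (real m)\<^sup>2 + \<beta>\<^sup>2) = sqrt s"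
    unfolding s_def sqrt_def using real_root_mult_exp[of 2 2] by simp
  ultimately show ?thesis
    using half_period has_integral_f has_integral_f_cube has_integral_f_fifth
    by (auto intro: integral_unique)
qed

end
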